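(* If there exists a non-principal nowhere dense ultrafilter on $\omega$, then there exists a $\sigma$-centered forcing notion $\mathbb{P}$ such that above every element of $\mathbb{P}$ there are two incompatible elements and $\mathbb{P}$ does not add a Cohen real.
   Context: Forcing order convention: $p\leqslant q$ means $q$ is stronger than $p$. $\mathbb{P}$ is $\sigma$-centered if $\mathbb{P}=\bigcup_{n<\omega}A_n$ with each $A_n$ directed (any two elements of $A_n$ have a common upper bound in $A_n$). $\mathbb{P}$ adds a Cohen real if there is a $\mathbb{P}$-name $\underline{r}$ for an element of ${}^\omega 2$ such that for every ground-model open dense $\mathcal{D}\subseteq{}^\omega 2$, $\Vdash_{\mathbb{P}}\underline{r}\in\mathcal{D}^*$, $\mathcal{D}^*$ being the reinterpretation of $\mathcal{D}$ in the extension. A filter $D$ on $\omega$ is nowhere dense if for every $f\colon\omega\to{}^\omega 2$ there is $A\in D$ with $f(A)$ nowhere dense in ${}^\omega 2$. *)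

theory Defs
  imports Main
begin

definition cyl :: "bool list \<Rightarrow> (nat \<Rightarrow> bool) set" where
  "cyl s = {x. \<forall>i<length s. x i = s ! i}"

definition cantor_open :: "(nat \<Rightarrow> bool) set \<Rightarrow> bool" where
  "cantor_open D \<longleftrightarrow> (\<forall>x\<in>D. \<exists>n. cyl (map x [0..<n]) \<subseteq> D)"

definition cantor_dense :: "(nat \<Rightarrow> bool) set \<Rightarrow> bool" where
  "cantor_dense D \<longleftrightarrow> (\<forall>s. cyl s \<inter> D \<noteq> {})"

definition cantor_nowhere_dense :: "(nat \<Rightarrow> bool) set \<Rightarrow> bool" where
  "cantor_nowhere_dense A \<longleftrightarrow> (\<forall>s. \<exists>t. cyl t \<subseteq> cyl s \<and> cyl t \<inter> A = {})"

definition ultrafilter_on_nat :: "nat set set \<Rightarrow> bool" where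
  "ultrafilter_on_nat U \<longleftrightarrow>
     UNIV \<in> U \<and> {} \<notin> U \<and>
     (\<forall>A B. A \<in> U \<longrightarrow> A \<subseteq> B \<longrightarrow> B \<in> U) \<and>
     (\<forall>A B. A \<in> U \<longrightarrow> B \<in> U \<longrightarrow> A \<inter> B \<in> U) \<and>
     (\<forall>A. A \<in> U \<or> - A \<in> U)"

definition nonprincipal :: "nat set set \<Rightarrow> bool" where
  "nonprincipal U \<longleftrightarrow> (\<forall>n. {n} \<notin> U)"

definition nowhere_dense_filter :: "nat set set \<Rightarrow> bool" where
  "nowhere_dense_filter D \<longleftrightarrow>
     (\<forall>f :: nat \<Rightarrow> (nat \<Rightarrow> bool). \<exists>A\<in>D. cantor_nowhere_dense (f ` A))"

section \<open>Forcing notions (p \<le> q means q is stronger)\<close>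

definition forcing_notion :: "'a set \<Rightarrow> ('a \<Rightarrow> 'a \<Rightarrow> bool) \<Rightarrow> bool" where
  "forcing_notion P le \<longleftrightarrow> P \<noteq> {} \<and> (\<forall>p\<in>P. le p p) \<and>
     (\<forall>p\<in>P. \<forall>q\<in>P. \<forall>r\<in>P. le p q \<longrightarrow> le q r \<longrightarrow> le p r)"

definition compatible :: "'a set \<Rightarrow> ('a \<Rightarrow> 'a \<Rightarrow> bool) \<Rightarrow> 'a \<Rightarrow> 'a \<Rightarrow> bool" where
  "compatible P le p q \<longleftrightarrow> (\<exists>r\<in>P. le p r \<and> le q r)"

definition directed_in :: "('a \<Rightarrow> 'a \<Rightarrow> bool) \<Rightarrow> 'a set \<Rightarrow> bool" where
  "directed_in le A \<longleftrightarrow> (\<forall>p\<in>A. \<forall>q\<in>A. \<exists>r\<in>A. le p r \<and> le q r)"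

definition sigma_centered :: "'a set \<Rightarrow> ('a \<Rightarrow> 'a \<Rightarrow> bool) \<Rightarrow> bool" where
  "sigma_centered P le \<longleftrightarrow>
     (\<exists>A :: nat \<Rightarrow> 'a set. P = (\<Union>n. A n) \<and> (\<forall>n. directed_in le (A n)))"

definition splitting_everywhere :: "'a set \<Rightarrow> ('a \<Rightarrow> 'a \<Rightarrow> bool) \<Rightarrow> bool" where
  "splitting_everywhere P le \<longleftrightarrow>
     (\<forall>p\<in>P. \<exists>q\<in>P. \<exists>r\<in>P. le p q \<and> le p r \<and> \<not> compatible P le q r)"

text \<open>A P-name for an element of \<omega>2, represented (as a nice name / Boolean-valued name)
  by its forcing relation  F p n b  meaning  "p \<Vdash> r(n) = b".\<close>
definition real_name :: "'a set \<Rightarrow> ('a \<Rightarrow> 'a \<Rightarrow> bool) \<Rightarrow> ('a \<Rightarrow> nat \<Rightarrow> bool \<Rightarrow> bool) \<Rightarrow> bool" where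
  "real_name P le F \<longleftrightarrow>
     (\<forall>p\<in>P. \<forall>q\<in>P. \<forall>n b. le p q \<longrightarrow> F p n b \<longrightarrow> F q n b) \<and>
     (\<forall>p\<in>P. \<forall>n. \<not> (F p n True \<and> F p n False)) \<and>
     (\<forall>p\<in>P. \<forall>n. \<exists>q\<in>P. le p q \<and> (\<exists>b. F q n b)) \<and>
     (\<forall>p\<in>P. \<forall>n b. (\<forall>q\<in>P. le p q \<longrightarrow> (\<exists>r\<in>P. le q r \<and> F r n b)) \<longrightarrow> F p n b)"

text \<open>For an open D, the reinterpretation D* is the union of the (reinterpreted) basic
  cylinders [s] with [s] \<subseteq> D; hence "\<Vdash> r \<in> D*" means: densely many conditions
  force r to extend some s with [s] \<subseteq> D.\<close>
definition forces_in_open :: "'a set \<Rightarrow> ('a \<Rightarrow> 'a \<Rightarrow> bool) \<Rightarrow> ('a \<Rightarrow> nat \<Rightarrow> bool \<Rightarrow> bool)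
    \<Rightarrow> (nat \<Rightarrow> bool) set \<Rightarrow> bool" where
  "forces_in_open P le F D \<longleftrightarrow>
     (\<forall>p\<in>P. \<exists>q\<in>P. le p q \<and> (\<exists>s. cyl s \<subseteq> D \<and> (\<forall>i<length s. F q i (s ! i))))"

definition adds_cohen_real :: "'a set \<Rightarrow> ('a \<Rightarrow> 'a \<Rightarrow> bool) \<Rightarrow> bool" where
  "adds_cohen_real P le \<longleftrightarrow>
     (\<exists>F. real_name P le F \<and>
        (\<forall>D. cantor_open D \<longrightarrow> cantor_dense D \<longrightarrow> forces_in_open P le F D))"

end

theory Submission
  imports Defs "HOL-Library.Nat_Bijection"
begin

text \<open>Conditions are nonempty sets of finite sequences of naturals in which every node has
  U-many one-step extensions, ordered by reverse inclusion. Conditions sharing a node are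
  compatible, which gives \<sigma>-centeredness, and the cones above two distinct successors of a
  node split. Given a name r for a real, say that a node s forces r(i) = b if some
  condition containing s does. Since U is an ultrafilter, every node decides every digit
  of r, so it determines a real z(s), and z(s a) converges to z(s) along U. Nowhere density
  of U yields, for each s, a set in U of successors a for which the reals z(s a) form a
  nowhere dense set. Thinning these sets by a fusion along the nodes, ordered by a weight
  with finite levels, produces a condition X for which z[X] is nowhere dense. The
  complement of its closure is open dense, yet no extension of X forces r into it.\<close>

section \<open>Cantor space\<close>

lemma cyl_nonempty: "cyl s \<noteq> {}"
proof -
  have "(\<lambda>i. i < length s \<and> s ! i) \<in> cyl s"
    unfolding cyl_def by simp
  then show ?thesis by blast
qed

lemma cantor_open_Union_cyl: "cantor_open (\<Union> (cyl ` V))"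
  unfolding cantor_open_def
proof
  fix x assume "x \<in> \<Union> (cyl ` V)"
  then obtain v where "v \<in> V" "x \<in> cyl v" by blast
  then have "cyl (map x [0..<length v]) = cyl v"
    unfolding cyl_def by auto
  then show "\<exists>n. cyl (map x [0..<n]) \<subseteq> \<Union> (cyl ` V)"
    using \<open>v \<in> V\<close> by blast
qed

lemma cantor_dense_Union_cyl_avoiding:
  assumes "cantor_nowhere_dense Z"
  shows "cantor_dense (\<Union> (cyl ` {v. cyl v \<inter> Z = {}}))"
  unfolding cantor_dense_def
proof
  fix s
  obtain t where "cyl t \<subseteq> cyl s" "cyl t \<inter> Z = {}"
    using assms unfolding cantor_nowhere_dense_def by blast
  then show "cyl s \<inter> \<Union> (cyl ` {v. cyl v \<inter> Z = {}}) \<noteq> {}"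
    using cyl_nonempty[of t] by blast
qed

lemma cantor_nowhere_dense_Un:
  assumes "cantor_nowhere_dense A" "cantor_nowhere_dense B"
  shows "cantor_nowhere_dense (A \<union> B)"
  unfolding cantor_nowhere_dense_def
proof
  fix s
  obtain t where "cyl t \<subseteq> cyl s" "cyl t \<inter> A = {}"
    using assms(1) unfolding cantor_nowhere_dense_def by blast
  moreover obtain t' where "cyl t' \<subseteq> cyl t" "cyl t' \<inter> B = {}"
    using assms(2) unfolding cantor_nowhere_dense_def by blast
  ultimately show "\<exists>t. cyl t \<subseteq> cyl s \<and> cyl t \<inter> (A \<union> B) = {}"
    by blast
qed

lemma cyl_append_subset: "cyl (s @ t) \<subseteq> cyl s"
proof
  fix x assume x: "x \<in> cyl (s @ t)"
  have "x i = s ! i" if "i < length s" for i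
  proof -
    have "x i = (s @ t) ! i"
      using x that unfolding cyl_def by simp
    then show ?thesis
      using that by (simp add: nth_append)
  qed
  then show "x \<in> cyl s"
    unfolding cyl_def by simp
qed

lemma cantor_nowhere_dense_singleton: "cantor_nowhere_dense {x}"
  unfolding cantor_nowhere_dense_def
proof
  fix s :: "bool list"
  define b where "b = (\<not> x (length s))"
  have "x \<notin> cyl (s @ [b])"
  proof
    assume "x \<in> cyl (s @ [b])"
    then have "x (length s) = b"
      unfolding cyl_def by simp
    then show False
      unfolding b_def by simp
  qed
  then show "\<exists>t. cyl t \<subseteq> cyl s \<and> cyl t \<inter> {x} = {}"
    using cyl_append_subset by blast
qed

lemma cantor_nowhere_dense_insert:
  "cantor_nowhere_dense A \<Longrightarrow> cantor_nowhere_dense (insert x A)"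
  using cantor_nowhere_dense_Un[OF cantor_nowhere_dense_singleton] by (metis insert_is_Un)

lemma cantor_nowhere_dense_UN:
  "finite I \<Longrightarrow> (\<And>i. i \<in> I \<Longrightarrow> cantor_nowhere_dense (B i)) \<Longrightarrow>
    cantor_nowhere_dense (\<Union>i\<in>I. B i)"
proof (induction rule: finite_induct)
  case empty
  then show ?case
    unfolding cantor_nowhere_dense_def by blast
next
  case (insert i I)
  then show ?case
    by (simp add: cantor_nowhere_dense_Un)
qed

section \<open>The ultrafilter forcing\<close>

locale nat_ultrafilter =
  fixes U :: "nat set set"
  assumes ultrafilter: "ultrafilter_on_nat U"
begin

lemma UNIV_in: "UNIV \<in> U"
  and empty_notin: "{} \<notin> U"
  and superset_in: "A \<in> U \<Longrightarrow> A \<subseteq> B \<Longrightarrow> B \<in> U"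
  and Int_in: "A \<in> U \<Longrightarrow> B \<in> U \<Longrightarrow> A \<inter> B \<in> U"
  and Compl_in: "A \<notin> U \<Longrightarrow> - A \<in> U"
  using ultrafilter unfolding ultrafilter_on_nat_def by blast+

lemma in_nonempty: "A \<in> U \<Longrightarrow> \<exists>x. x \<in> A"
  using empty_notin by (metis equals0I)

lemma finite_notin:
  assumes "nonprincipal U"
  shows "finite A \<Longrightarrow> A \<notin> U"
proof (induction rule: finite_induct)
  case empty
  show ?case
    by (rule empty_notin)
next
  case (insert x A)
  show ?case
  proof
    assume "insert x A \<in> U"
    moreover have "- {x} \<in> U"
      using assms Compl_in unfolding nonprincipal_def by blast
    ultimately have "insert x A \<inter> - {x} \<in> U"
      by (rule Int_in)
    then have "A \<in> U"
      by (rule superset_in) blast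
    then show False
      using insert.IH by contradiction
  qed
qed

lemma two_elements:
  assumes "nonprincipal U" "A \<in> U"
  shows "\<exists>a\<in>A. \<exists>b\<in>A. a \<noteq> b"
proof -
  have "infinite A"
    using assms finite_notin by blast
  then obtain a where "a \<in> A"
    using infinite_imp_nonempty by blast
  moreover have "infinite (A - {a})"
    using \<open>infinite A\<close> by simp
  then obtain b where "b \<in> A - {a}"
    using infinite_imp_nonempty by blast
  ultimately show ?thesis
    by blast
qed

end

definition U_open :: "nat set set \<Rightarrow> nat list set \<Rightarrow> bool" where
  "U_open U X \<longleftrightarrow> (\<forall>s\<in>X. {a. s @ [a] \<in> X} \<in> U)"

definition U_forcing :: "nat set set \<Rightarrow> nat list set set" where
  "U_forcing U = {X. X \<noteq> {} \<and> U_open U X}"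

definition cone :: "nat list set \<Rightarrow> nat list \<Rightarrow> nat list set" where
  "cone X t = {t @ ys | ys. \<forall>k\<le>length ys. t @ take k ys \<in> X}"

lemma cone_subset: "cone X t \<subseteq> X"
proof
  fix x assume "x \<in> cone X t"
  then obtain ys where "x = t @ ys" "\<forall>k\<le>length ys. t @ take k ys \<in> X"
    unfolding cone_def by blast
  then show "x \<in> X"
    by (metis order_refl take_all)
qed

lemma self_in_cone: "t \<in> X \<Longrightarrow> t \<in> cone X t"
  unfolding cone_def by force

lemma in_coneE: "x \<in> cone X t \<Longrightarrow> (\<And>ys. x = t @ ys \<Longrightarrow> P) \<Longrightarrow> P"
  unfolding cone_def by blast

lemma cones_disjoint:
  assumes "a \<noteq> b"
  shows "cone X (s @ [a]) \<inter> cone Y (s @ [b]) = {}"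
proof -
  have False if "x \<in> cone X (s @ [a])" "x \<in> cone Y (s @ [b])" for x
    using that assms by (elim in_coneE) simp
  then show ?thesis
    by blast
qed

context nat_ultrafilter
begin

lemma U_open_cone:
  assumes "U_open U X"
  shows "U_open U (cone X t)"
  unfolding U_open_def
proof
  fix w assume "w \<in> cone X t"
  then obtain ys where ys: "w = t @ ys" "\<forall>k\<le>length ys. t @ take k ys \<in> X"
    unfolding cone_def by blast
  have "w @ [a] \<in> cone X t" if "w @ [a] \<in> X" for a
  proof -
    have "t @ take k (ys @ [a]) \<in> X" if "k \<le> length (ys @ [a])" for k
      using that ys \<open>w @ [a] \<in> X\<close> by (cases "k \<le> length ys") (auto simp: le_Suc_eq)
    then show ?thesis
      unfolding cone_def using ys(1) by force
  qed
  moreover have "{a. w @ [a] \<in> X} \<in> U"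
    using assms \<open>w \<in> cone X t\<close> cone_subset unfolding U_open_def by blast
  ultimately show "{a. w @ [a] \<in> cone X t} \<in> U"
    using superset_in by (metis (no_types, lifting) mem_Collect_eq subsetI)
qed

lemma cone_in_U_forcing: "X \<in> U_forcing U \<Longrightarrow> t \<in> X \<Longrightarrow> cone X t \<in> U_forcing U"
  unfolding U_forcing_def using U_open_cone self_in_cone by blast

lemma U_open_Int:
  assumes "U_open U X" "U_open U Y"
  shows "U_open U (X \<inter> Y)"
  unfolding U_open_def
proof
  fix w assume "w \<in> X \<inter> Y"
  then have "{a. w @ [a] \<in> X} \<inter> {a. w @ [a] \<in> Y} \<in> U"
    using assms Int_in unfolding U_open_def by blast
  then show "{a. w @ [a] \<in> X \<inter> Y} \<in> U"
    by (simp add: Collect_conj_eq)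
qed

lemma forcing_notion_U_forcing: "forcing_notion (U_forcing U) (\<supseteq>)"
proof -
  have "UNIV \<in> U_forcing U"
    unfolding U_forcing_def U_open_def using UNIV_in by simp
  then show ?thesis
    unfolding forcing_notion_def by blast
qed

text \<open>Conditions sharing a node are compatible, so grouping them by a common node
  (nodes being countably many) makes the forcing \<sigma>-centered.\<close>
lemma sigma_centered_U_forcing: "sigma_centered (U_forcing U) (\<supseteq>)"
  unfolding sigma_centered_def
proof (intro exI conjI allI)
  let ?A = "\<lambda>n. {X \<in> U_forcing U. list_decode n \<in> X}"
  show "U_forcing U = (\<Union>n. ?A n)"
  proof
    show "U_forcing U \<subseteq> (\<Union>n. ?A n)"
    proof
      fix X assume "X \<in> U_forcing U"
      moreover obtain s where "s \<in> X"
        using \<open>X \<in> U_forcing U\<close> unfolding U_forcing_def by blast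
      ultimately have "X \<in> ?A (list_encode s)"
        by simp
      then show "X \<in> (\<Union>n. ?A n)"
        by blast
    qed
  qed blast
  show "directed_in (\<supseteq>) (?A n)" for n
    unfolding directed_in_def
  proof (intro ballI)
    fix X Y assume "X \<in> ?A n" "Y \<in> ?A n"
    then have "X \<inter> Y \<in> ?A n"
      unfolding U_forcing_def using U_open_Int by auto
    then show "\<exists>Z\<in>?A n. Z \<subseteq> X \<and> Z \<subseteq> Y"
      by (intro bexI[of _ "X \<inter> Y"]) auto
  qed
qed

lemma splitting_everywhere_U_forcing:
  assumes "nonprincipal U"
  shows "splitting_everywhere (U_forcing U) (\<supseteq>)"
  unfolding splitting_everywhere_def
proof
  fix X assume X: "X \<in> U_forcing U"
  then obtain s where "s \<in> X"
    unfolding U_forcing_def by blast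
  then have "{a. s @ [a] \<in> X} \<in> U"
    using X unfolding U_forcing_def U_open_def by blast
  then obtain a b where ab: "s @ [a] \<in> X" "s @ [b] \<in> X" "a \<noteq> b"
    using two_elements[OF assms] by blast
  let ?q = "cone X (s @ [a])" and ?r = "cone X (s @ [b])"
  have q: "?q \<in> U_forcing U" and r: "?r \<in> U_forcing U"
    using cone_in_U_forcing[OF X] ab by simp_all
  have "\<not> compatible (U_forcing U) (\<supseteq>) ?q ?r"
  proof
    assume "compatible (U_forcing U) (\<supseteq>) ?q ?r"
    then obtain Y where "Y \<in> U_forcing U" "Y \<subseteq> ?q \<inter> ?r"
      unfolding compatible_def by blast
    then show False
      using cones_disjoint[OF ab(3)] unfolding U_forcing_def by blast
  qed
  then show "\<exists>q\<in>U_forcing U. \<exists>r\<in>U_forcing U. q \<subseteq> X \<and> r \<subseteq> X \<and>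
      \<not> compatible (U_forcing U) (\<supseteq>) q r"
    using q r cone_subset[of X] by blast
qed

end

definition amalgam :: "nat list \<Rightarrow> nat set \<Rightarrow> (nat \<Rightarrow> nat list set) \<Rightarrow> nat list set" where
  "amalgam s S G = insert s (\<Union>a\<in>S. cone (G a) (s @ [a]))"

lemma amalgam_cone:
  assumes "w \<in> amalgam s S G" "a \<in> S" "w = s @ [a] @ ys"
  shows "w \<in> cone (G a) (s @ [a])"
proof -
  obtain a' where "a' \<in> S" "w \<in> cone (G a') (s @ [a'])"
    using assms(1,3) unfolding amalgam_def by auto
  moreover from this(2) have "a' = a"
    using assms(3) by (elim in_coneE) simp
  ultimately show ?thesis
    by simp
qed

context nat_ultrafilter
begin

lemma amalgam_in_U_forcing:
  assumes S: "S \<in> U" and G: "\<And>a. a \<in> S \<Longrightarrow> G a \<in> U_forcing U \<and> s @ [a] \<in> G a"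
  shows "amalgam s S G \<in> U_forcing U"
  unfolding U_forcing_def U_open_def
proof (intro CollectI conjI ballI)
  show "amalgam s S G \<noteq> {}"
    unfolding amalgam_def by blast
  fix w assume w: "w \<in> amalgam s S G"
  show "{c. w @ [c] \<in> amalgam s S G} \<in> U"
  proof (cases "w = s")
    case True
    have "S \<subseteq> {c. w @ [c] \<in> amalgam s S G}"
      using G self_in_cone True unfolding amalgam_def by blast
    then show ?thesis
      using S superset_in by blast
  next
    case False
    then obtain a where a: "a \<in> S" "w \<in> cone (G a) (s @ [a])"
      using w unfolding amalgam_def by blast
    then have "{c. w @ [c] \<in> cone (G a) (s @ [a])} \<in> U"
      using G U_open_cone unfolding U_forcing_def U_open_def by blast
    moreover have "cone (G a) (s @ [a]) \<subseteq> amalgam s S G"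
      using a(1) unfolding amalgam_def by blast
    then have "{c. w @ [c] \<in> cone (G a) (s @ [a])} \<subseteq> {c. w @ [c] \<in> amalgam s S G}"
      by blast
    ultimately show ?thesis
      by (rule superset_in)
  qed
qed

lemma extension_of_amalgam:
  assumes S: "S \<in> U" and G: "\<And>a. a \<in> S \<Longrightarrow> G a \<in> U_forcing U \<and> s @ [a] \<in> G a"
    and q: "q \<in> U_forcing U" "q \<subseteq> amalgam s S G"
  obtains r a where "r \<in> U_forcing U" "r \<subseteq> q" "a \<in> S" "r \<subseteq> G a"
proof -
  obtain w a where w: "w \<in> q" "a \<in> S" "w \<in> cone (G a) (s @ [a])"
  proof -
    obtain w where "w \<in> q"
      using q(1) unfolding U_forcing_def by blast
    show ?thesis
    proof (cases "w = s")
      case True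
      then have "{c. s @ [c] \<in> q} \<inter> S \<in> U"
        using q(1) \<open>w \<in> q\<close> S Int_in unfolding U_forcing_def U_open_def by blast
      then obtain a where "s @ [a] \<in> q" "a \<in> S"
        using in_nonempty by blast
      then show ?thesis
        using that G self_in_cone by blast
    next
      case False
      then show ?thesis
        using that \<open>w \<in> q\<close> q(2) unfolding amalgam_def by blast
    qed
  qed
  have "cone q w \<subseteq> G a"
  proof
    fix x assume x: "x \<in> cone q w"
    obtain ys zs where "x = w @ ys" "w = s @ [a] @ zs"
      using x w(3) by (auto elim!: in_coneE)
    moreover have "x \<in> amalgam s S G"
      using x cone_subset q(2) by blast
    ultimately have "x \<in> cone (G a) (s @ [a])"
      using amalgam_cone w(2) by simp
    then show "x \<in> G a"
      using cone_subset by blast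
  qed
  then show ?thesis
    using that cone_in_U_forcing[OF q(1) w(1)] cone_subset w(2) by blast
qed

end

section \<open>Reals determined by the nodes\<close>

locale U_forcing_name = nat_ultrafilter +
  fixes F :: "nat list set \<Rightarrow> nat \<Rightarrow> bool \<Rightarrow> bool"
  assumes real_name: "real_name (U_forcing U) (\<supseteq>) F"
begin

lemma forces_mono:
  "X \<in> U_forcing U \<Longrightarrow> Y \<in> U_forcing U \<Longrightarrow> Y \<subseteq> X \<Longrightarrow> F X i b \<Longrightarrow> F Y i b"
  using real_name[unfolded real_name_def, THEN conjunct1] by blast

lemma forces_consistent: "X \<in> U_forcing U \<Longrightarrow> \<not> (F X i True \<and> F X i False)"
  using real_name[unfolded real_name_def, THEN conjunct2, THEN conjunct1] by blast

lemma forces_decided_densely: "X \<in> U_forcing U \<Longrightarrow> \<exists>Y\<in>U_forcing U. Y \<subseteq> X \<and> (\<exists>b. F Y i b)"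
  using real_name[unfolded real_name_def, THEN conjunct2, THEN conjunct2, THEN conjunct1] by blast

lemma forces_if_densely_forced:
  "X \<in> U_forcing U \<Longrightarrow> (\<forall>Y\<in>U_forcing U. Y \<subseteq> X \<longrightarrow> (\<exists>Z\<in>U_forcing U. Z \<subseteq> Y \<and> F Z i b)) \<Longrightarrow>
    F X i b"
  using real_name[unfolded real_name_def, THEN conjunct2, THEN conjunct2, THEN conjunct2] by blast

definition node_forces :: "nat list \<Rightarrow> nat \<Rightarrow> bool \<Rightarrow> bool" where
  "node_forces s i b \<longleftrightarrow> (\<exists>X\<in>U_forcing U. s \<in> X \<and> F X i b)"

lemma node_forcesI: "X \<in> U_forcing U \<Longrightarrow> s \<in> X \<Longrightarrow> F X i b \<Longrightarrow> node_forces s i b"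
  unfolding node_forces_def by blast

lemma node_forces_consistent: "\<not> (node_forces s i True \<and> node_forces s i False)"
proof
  assume "node_forces s i True \<and> node_forces s i False"
  then obtain X Y where X: "X \<in> U_forcing U" "s \<in> X" "F X i True"
    and Y: "Y \<in> U_forcing U" "s \<in> Y" "F Y i False"
    unfolding node_forces_def by blast
  have XY: "X \<inter> Y \<in> U_forcing U"
    using X Y U_open_Int unfolding U_forcing_def by blast
  then have "F (X \<inter> Y) i True" "F (X \<inter> Y) i False"
    using forces_mono X Y by blast+
  then show False
    using forces_consistent[OF XY] by blast
qed

text \<open>The amalgam of the witnessing conditions forces the digit densely, hence forces it.\<close>
lemma node_forces_if_U_many_successors:
  assumes S: "{a. node_forces (s @ [a]) i b} \<in> U"
  shows "node_forces s i b"
proof -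
  let ?S = "{a. node_forces (s @ [a]) i b}"
  have "\<forall>a\<in>?S. \<exists>X. X \<in> U_forcing U \<and> s @ [a] \<in> X \<and> F X i b"
    unfolding node_forces_def by blast
  then obtain G where G: "\<forall>a\<in>?S. G a \<in> U_forcing U \<and> s @ [a] \<in> G a \<and> F (G a) i b"
    by (rule bchoice[THEN exE])
  then have G_cond: "\<And>a. a \<in> ?S \<Longrightarrow> G a \<in> U_forcing U \<and> s @ [a] \<in> G a"
    by blast
  have X: "amalgam s ?S G \<in> U_forcing U"
    using S G_cond by (rule amalgam_in_U_forcing)
  have "F (amalgam s ?S G) i b"
  proof (rule forces_if_densely_forced[OF X], intro ballI impI)
    fix q assume "q \<in> U_forcing U" "q \<subseteq> amalgam s ?S G"
    with S G_cond obtain r a where r: "r \<in> U_forcing U" "r \<subseteq> q" and "a \<in> ?S" "r \<subseteq> G a"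
      by (rule extension_of_amalgam)
    then have "F r i b"
      using G forces_mono[of "G a" r] by blast
    then show "\<exists>r\<in>U_forcing U. r \<subseteq> q \<and> F r i b"
      using r by blast
  qed
  then show ?thesis
    using node_forcesI[OF X] unfolding amalgam_def by blast
qed

text \<open>The undecided nodes would form a condition, but some extension of it decides the digit.\<close>
lemma node_forces_total: "node_forces s i True \<or> node_forces s i False"
proof (rule ccontr)
  let ?N = "{w. \<not> node_forces w i True \<and> \<not> node_forces w i False}"
  assume "\<not> (node_forces s i True \<or> node_forces s i False)"
  then have "s \<in> ?N"
    by blast
  moreover have "U_open U ?N"
    unfolding U_open_def
  proof
    fix w assume "w \<in> ?N"
    have "- {a. node_forces (w @ [a]) i b} \<in> U" for b
    proof (rule Compl_in notI)+
      assume "{a. node_forces (w @ [a]) i b} \<in> U"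
      then have "node_forces w i b"
        by (rule node_forces_if_U_many_successors)
      then show False
        using \<open>w \<in> ?N\<close> by (cases b) simp_all
    qed
    then have "- {a. node_forces (w @ [a]) i True} \<inter> - {a. node_forces (w @ [a]) i False} \<in> U"
      using Int_in by blast
    then show "{a. w @ [a] \<in> ?N} \<in> U"
      by (simp add: Collect_conj_eq Compl_eq)
  qed
  ultimately have "?N \<in> U_forcing U"
    unfolding U_forcing_def by blast
  then obtain Y b where Y: "Y \<in> U_forcing U" "Y \<subseteq> ?N" "F Y i b"
    using forces_decided_densely by blast
  then obtain w where "w \<in> Y"
    unfolding U_forcing_def by blast
  then have "node_forces w i b" "w \<in> ?N"
    using Y node_forcesI by blast+
  then show False
    by (cases b) simp_all
qed

definition node_value :: "nat list \<Rightarrow> nat \<Rightarrow> bool" where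
  "node_value s i = node_forces s i True"

lemma node_forces_iff: "node_forces s i b \<longleftrightarrow> node_value s i = b"
  unfolding node_value_def using node_forces_consistent[of s i] node_forces_total[of s i]
  by (cases b) auto

lemma node_value_in_cyl:
  assumes "X \<in> U_forcing U" "w \<in> X" "\<forall>i<length u. F X i (u ! i)"
  shows "node_value w \<in> cyl u"
  using assms node_forcesI node_forces_iff unfolding cyl_def by blast

lemma node_value_successors: "{a. \<forall>i<k. node_value (s @ [a]) i = node_value s i} \<in> U"
proof (induction k)
  case 0
  show ?case
    using UNIV_in by simp
next
  case (Suc k)
  obtain X where X: "X \<in> U_forcing U" "s \<in> X" "F X k (node_value s k)"
    using node_forces_iff unfolding node_forces_def by blast
  have "{a. s @ [a] \<in> X} \<subseteq> {a. node_value (s @ [a]) k = node_value s k}"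
    using node_forcesI[OF X(1) _ X(3)] node_forces_iff by blast
  then have "{a. node_value (s @ [a]) k = node_value s k} \<in> U"
    using X superset_in unfolding U_forcing_def U_open_def by blast
  then have "{a. \<forall>i<k. node_value (s @ [a]) i = node_value s i}
      \<inter> {a. node_value (s @ [a]) k = node_value s k} \<in> U"
    using Suc.IH Int_in by blast
  moreover have "{a. \<forall>i<Suc k. node_value (s @ [a]) i = node_value s i} =
      {a. \<forall>i<k. node_value (s @ [a]) i = node_value s i} \<inter> {a. node_value (s @ [a]) k = node_value s k}"
    by (auto simp: less_Suc_eq)
  ultimately show ?case
    by simp
qed

end

section \<open>A fusion condition with nowhere dense values\<close>

definition weight :: "nat list \<Rightarrow> nat" where
  "weight s = length s + sum_list s"

lemma weight_take_mono: "m \<le> n \<Longrightarrow> weight (take m t) \<le> weight (take n t)"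
proof -
  assume "m \<le> n"
  then have "take n t = take m t @ drop m (take n t)"
    by (metis append_take_drop_id min.absorb1 take_take)
  then have "weight (take n t) = weight (take m t) + weight (drop m (take n t))"
    unfolding weight_def by (metis length_append sum_list_append add.assoc add.left_commute)
  then show ?thesis by simp
qed

lemma finite_weight_le: "finite {s. weight s \<le> j}"
proof -
  have "set s \<subseteq> {..j} \<and> length s \<le> j" if "weight s \<le> j" for s
  proof
    show "set s \<subseteq> {..j}"
    proof
      fix x assume "x \<in> set s"
      then have "x \<le> sum_list s"
        by (simp add: member_le_sum_list)
      then show "x \<in> {..j}"
        using that by (simp add: weight_def)
    qed
  qed (use that in \<open>simp add: weight_def\<close>)
  then have "{s. weight s \<le> j} \<subseteq> {s. set s \<subseteq> {..j} \<and> length s \<le> j}"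
    by blast
  then show ?thesis
    by (rule finite_subset) (simp add: finite_lists_length_le)
qed

lemma finite_bool_lists_length_le: "finite {u :: bool list. length u \<le> n}"
  using finite_lists_length_le[of "UNIV :: bool set" n] by simp

lemma crossing_index:
  fixes f :: "nat \<Rightarrow> nat"
  shows "f 0 \<le> j \<Longrightarrow> j < f n \<Longrightarrow> \<exists>m<n. f m \<le> j \<and> j < f (Suc m)"
proof (induction n)
  case (Suc n)
  show ?case
  proof (cases "j < f n")
    case True
    then show ?thesis
      using Suc less_SucI by blast
  next
    case False
    then show ?thesis
      using Suc.prems(2) by (intro exI[of _ n]) simp
  qed
qed simp

locale U_forcing_name_nowhere_dense = U_forcing_name +
  assumes nowhere_dense: "nowhere_dense_filter U"
begin

definition sparse_successors :: "nat list \<Rightarrow> nat set" where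
  "sparse_successors s =
    (SOME A. A \<in> U \<and> cantor_nowhere_dense ((\<lambda>a. node_value (s @ [a])) ` A))"

lemma sparse_successors:
  "sparse_successors s \<in> U"
  "cantor_nowhere_dense ((\<lambda>a. node_value (s @ [a])) ` sparse_successors s)"
proof -
  have "\<exists>A. A \<in> U \<and> cantor_nowhere_dense ((\<lambda>a. node_value (s @ [a])) ` A)"
    using nowhere_dense unfolding nowhere_dense_filter_def by blast
  then have "sparse_successors s \<in> U \<and>
      cantor_nowhere_dense ((\<lambda>a. node_value (s @ [a])) ` sparse_successors s)"
    unfolding sparse_successors_def by (rule someI_ex)
  then show "sparse_successors s \<in> U"
    "cantor_nowhere_dense ((\<lambda>a. node_value (s @ [a])) ` sparse_successors s)"
    by blast+
qed

definition light_values :: "nat \<Rightarrow> (nat \<Rightarrow> bool) set" where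
  "light_values j = (\<Union>s\<in>{s. weight s \<le> j}.
    insert (node_value s) ((\<lambda>a. node_value (s @ [a])) ` sparse_successors s))"

lemma nowhere_dense_light_values: "cantor_nowhere_dense (light_values j)"
  unfolding light_values_def
  using finite_weight_le sparse_successors(2)
  by (intro cantor_nowhere_dense_UN cantor_nowhere_dense_insert)

lemma node_value_in_light_values: "weight s \<le> j \<Longrightarrow> node_value s \<in> light_values j"
  unfolding light_values_def by blast

lemma successor_value_in_light_values:
  "weight s \<le> j \<Longrightarrow> a \<in> sparse_successors s \<Longrightarrow> node_value (s @ [a]) \<in> light_values j"
  unfolding light_values_def by blast

definition escape :: "bool list \<Rightarrow> bool list" where
  "escape u = (SOME v. cyl v \<subseteq> cyl u \<and> cyl v \<inter> light_values (length u) = {})"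

lemma escape: "cyl (escape u) \<subseteq> cyl u" "cyl (escape u) \<inter> light_values (length u) = {}"
proof -
  have "\<exists>v. cyl v \<subseteq> cyl u \<and> cyl v \<inter> light_values (length u) = {}"
    using nowhere_dense_light_values unfolding cantor_nowhere_dense_def by blast
  then have "cyl (escape u) \<subseteq> cyl u \<and> cyl (escape u) \<inter> light_values (length u) = {}"
    unfolding escape_def by (rule someI_ex)
  then show "cyl (escape u) \<subseteq> cyl u" "cyl (escape u) \<inter> light_values (length u) = {}"
    by blast+
qed

definition escape_bound :: "nat \<Rightarrow> nat" where
  "escape_bound n = Max ((\<lambda>u. length (escape u)) ` {u. length u \<le> n})"

lemma length_escape_le: "length u \<le> n \<Longrightarrow> length (escape u) \<le> escape_bound n"
  unfolding escape_bound_def using finite_bool_lists_length_le by (intro Max_ge) auto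

lemma escape_bound_mono: "m \<le> n \<Longrightarrow> escape_bound m \<le> escape_bound n"
  unfolding escape_bound_def using finite_bool_lists_length_le
  by (intro Max_mono) (auto intro: exI[of _ "[]"])

definition good_successors :: "nat list \<Rightarrow> nat set" where
  "good_successors s = sparse_successors s \<inter>
    {a. \<forall>i<escape_bound (weight s). node_value (s @ [a]) i = node_value s i}"

definition fusion :: "nat list set" where
  "fusion = {t. \<forall>i<length t. t ! i \<in> good_successors (take i t)}"

lemma snoc_in_fusion: "t \<in> fusion \<Longrightarrow> a \<in> good_successors t \<Longrightarrow> t @ [a] \<in> fusion"
  unfolding fusion_def by (auto simp: nth_append less_Suc_eq)

lemma fusion_in_U_forcing: "fusion \<in> U_forcing U"
  unfolding U_forcing_def U_open_def
proof (intro CollectI conjI ballI)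
  have "[] \<in> fusion"
    unfolding fusion_def by simp
  then show "fusion \<noteq> {}"
    by blast
  fix t assume "t \<in> fusion"
  have "good_successors t \<in> U"
    unfolding good_successors_def using sparse_successors(1) node_value_successors by (rule Int_in)
  moreover have "good_successors t \<subseteq> {a. t @ [a] \<in> fusion}"
    using snoc_in_fusion \<open>t \<in> fusion\<close> by blast
  ultimately show "{a. t @ [a] \<in> fusion} \<in> U"
    by (rule superset_in)
qed

lemma node_value_fusion_agree:
  assumes "t \<in> fusion" "m \<le> n" "n \<le> length t" "i < escape_bound (weight (take m t))"
  shows "node_value (take n t) i = node_value (take m t) i"
  using assms(2-)
proof (induction n rule: dec_induct)
  case (step n)
  have "take (Suc n) t = take n t @ [t ! n]"
    using step.prems by (simp add: take_Suc_conv_app_nth)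
  moreover have "t ! n \<in> good_successors (take n t)"
    using assms(1) step.prems unfolding fusion_def by simp
  moreover have "escape_bound (weight (take m t)) \<le> escape_bound (weight (take n t))"
    using step.hyps by (intro escape_bound_mono weight_take_mono)
  ultimately show ?case
    using step unfolding good_successors_def by simp
qed simp

text \<open>Along a branch of the fusion, the first node of weight above the length of u has its
  value among the light values, which the escape of u avoids, and the value of every further
  node agrees with it beyond the length of that escape.\<close>
lemma nowhere_dense_fusion_values: "cantor_nowhere_dense (node_value ` fusion)"
  unfolding cantor_nowhere_dense_def
proof
  fix u
  have "node_value t \<notin> cyl (escape u)" if t: "t \<in> fusion" for t
  proof (cases "weight t \<le> length u")
    case True
    then have "node_value t \<in> light_values (length u)"
      by (rule node_value_in_light_values)
    then show ?thesis
      using escape(2) by blast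
  next
    case False
    have "weight (take 0 t) \<le> length u" "length u < weight (take (length t) t)"
      using False by (simp_all add: weight_def)
    then obtain m where m: "m < length t" "weight (take m t) \<le> length u"
      "length u < weight (take (Suc m) t)"
      using crossing_index[of "\<lambda>m. weight (take m t)"] by blast
    have "take (Suc m) t = take m t @ [t ! m]"
      using m(1) by (simp add: take_Suc_conv_app_nth)
    moreover have "t ! m \<in> sparse_successors (take m t)"
      using t m(1) unfolding fusion_def good_successors_def by simp
    ultimately have "node_value (take (Suc m) t) \<in> light_values (length u)"
      using successor_value_in_light_values[OF m(2)] by simp
    then obtain i where i: "i < length (escape u)" "node_value (take (Suc m) t) i \<noteq> escape u ! i"
      using escape(2) unfolding cyl_def by blast
    have "length (escape u) \<le> escape_bound (weight (take (Suc m) t))"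
      using m(3) by (intro length_escape_le) simp
    then have "node_value t i = node_value (take (Suc m) t) i"
      using node_value_fusion_agree[OF t, of "Suc m" "length t" i] m(1) i(1) by simp
    moreover have "node_value t i = escape u ! i" if "node_value t \<in> cyl (escape u)"
      using that i(1) unfolding cyl_def by blast
    ultimately show ?thesis
      using i(2) by auto
  qed
  then show "\<exists>v. cyl v \<subseteq> cyl u \<and> cyl v \<inter> node_value ` fusion = {}"
    using escape(1) by blast
qed

lemma forces_in_open_meets_fusion_values:
  assumes "forces_in_open (U_forcing U) (\<supseteq>) F D"
  shows "D \<inter> node_value ` fusion \<noteq> {}"
proof -
  obtain X u where X: "X \<in> U_forcing U" "X \<subseteq> fusion"
    and u: "cyl u \<subseteq> D" "\<forall>i<length u. F X i (u ! i)"
    using assms fusion_in_U_forcing unfolding forces_in_open_def by blast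
  obtain w where "w \<in> X"
    using X(1) unfolding U_forcing_def by blast
  then have "node_value w \<in> cyl u" "node_value w \<in> node_value ` fusion"
    using node_value_in_cyl[OF X(1) _ u(2)] X(2) by blast+
  then show ?thesis
    using u(1) by blast
qed

end

context nat_ultrafilter
begin

lemma not_adds_cohen_real_U_forcing:
  assumes "nowhere_dense_filter U"
  shows "\<not> adds_cohen_real (U_forcing U) (\<supseteq>)"
proof
  assume "adds_cohen_real (U_forcing U) (\<supseteq>)"
  then obtain F where F: "real_name (U_forcing U) (\<supseteq>) F"
    and Cohen: "\<And>D. cantor_open D \<Longrightarrow> cantor_dense D \<Longrightarrow> forces_in_open (U_forcing U) (\<supseteq>) F D"
    unfolding adds_cohen_real_def by blast
  interpret U_forcing_name_nowhere_dense U F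
    using F assms by unfold_locales
  let ?D = "\<Union> (cyl ` {v. cyl v \<inter> node_value ` fusion = {}})"
  have "forces_in_open (U_forcing U) (\<supseteq>) F ?D"
    by (intro Cohen cantor_open_Union_cyl cantor_dense_Union_cyl_avoiding nowhere_dense_fusion_values)
  then show False
    using forces_in_open_meets_fusion_values by blast
qed

end

section \<open>Transfer along order embeddings\<close>

definition order_embedding_on ::
    "'a set \<Rightarrow> ('a \<Rightarrow> 'a \<Rightarrow> bool) \<Rightarrow> ('b \<Rightarrow> 'b \<Rightarrow> bool) \<Rightarrow> ('a \<Rightarrow> 'b) \<Rightarrow> bool" where
  "order_embedding_on P le le' g \<longleftrightarrow> (\<forall>p\<in>P. \<forall>q\<in>P. le' (g p) (g q) \<longleftrightarrow> le p q)"

context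
  fixes P le le' g
  assumes emb: "order_embedding_on P le le' g"
begin

lemma order_embedding_onD: "p \<in> P \<Longrightarrow> q \<in> P \<Longrightarrow> le' (g p) (g q) \<longleftrightarrow> le p q"
  using emb unfolding order_embedding_on_def by blast

lemma forcing_notion_image: "forcing_notion P le \<Longrightarrow> forcing_notion (g ` P) le'"
  unfolding forcing_notion_def
  by (blast dest: order_embedding_onD[THEN iffD1] intro: order_embedding_onD[THEN iffD2])

lemma compatible_image:
  "p \<in> P \<Longrightarrow> q \<in> P \<Longrightarrow> compatible (g ` P) le' (g p) (g q) \<longleftrightarrow> compatible P le p q"
  unfolding compatible_def by (simp add: order_embedding_onD)

lemma directed_in_image: "A \<subseteq> P \<Longrightarrow> directed_in le A \<Longrightarrow> directed_in le' (g ` A)"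
  unfolding directed_in_def by (simp add: subset_iff order_embedding_onD)

lemma sigma_centered_image: "sigma_centered P le \<Longrightarrow> sigma_centered (g ` P) le'"
proof -
  assume "sigma_centered P le"
  then obtain A :: "nat \<Rightarrow> _" where A: "P = (\<Union>n. A n)" "\<And>n. directed_in le (A n)"
    unfolding sigma_centered_def by blast
  then have "directed_in le' (g ` A n)" for n
    by (intro directed_in_image) auto
  moreover have "g ` P = (\<Union>n. g ` A n)"
    using A(1) by (simp add: image_UN)
  ultimately show ?thesis
    unfolding sigma_centered_def by blast
qed

lemma splitting_everywhere_image:
  "splitting_everywhere P le \<Longrightarrow> splitting_everywhere (g ` P) le'"
  unfolding splitting_everywhere_def by (simp add: order_embedding_onD compatible_image)

lemma real_name_pullback: "real_name (g ` P) le' F \<Longrightarrow> real_name P le (\<lambda>p. F (g p))"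
  unfolding real_name_def by (simp add: order_embedding_onD)

lemma forces_in_open_pullback:
  "forces_in_open (g ` P) le' F D \<Longrightarrow> forces_in_open P le (\<lambda>p. F (g p)) D"
  unfolding forces_in_open_def by (simp add: order_embedding_onD)

lemma adds_cohen_real_image: "adds_cohen_real (g ` P) le' \<Longrightarrow> adds_cohen_real P le"
  unfolding adds_cohen_real_def using real_name_pullback forces_in_open_pullback by blast

end

theorem theorem3:
  assumes "\<exists>U. ultrafilter_on_nat U \<and> nonprincipal U \<and> nowhere_dense_filter U"
  shows "\<exists>(P :: nat set set set) le.
           forcing_notion P le \<and> sigma_centered P le \<and>
           splitting_everywhere P le \<and> \<not> adds_cohen_real P le"
proof -
  obtain U where U: "ultrafilter_on_nat U" "nonprincipal U" "nowhere_dense_filter U"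
    using assms by blast
  interpret nat_ultrafilter U
    using U(1) by unfold_locales
  \<comment> \<open>nodes are coded as singletons to reach the type of the statement\<close>
  define g :: "nat list set \<Rightarrow> nat set set" where "g X = (\<lambda>s. {list_encode s}) ` X" for X
  have "inj (\<lambda>s. {list_encode s})"
    by (simp add: inj_def list_encode_eq)
  then have g: "order_embedding_on (U_forcing U) (\<supseteq>) (\<supseteq>) g"
    unfolding order_embedding_on_def g_def by (simp add: inj_image_subset_iff)
  have "forcing_notion (g ` U_forcing U) (\<supseteq>)"
    using g forcing_notion_U_forcing by (rule forcing_notion_image)
  moreover have "sigma_centered (g ` U_forcing U) (\<supseteq>)"
    using g sigma_centered_U_forcing by (rule sigma_centered_image)
  moreover have "splitting_everywhere (g ` U_forcing U) (\<supseteq>)"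
    using g splitting_everywhere_U_forcing[OF U(2)] by (rule splitting_everywhere_image)
  moreover have "\<not> adds_cohen_real (g ` U_forcing U) (\<supseteq>)"
    using adds_cohen_real_image[OF g] not_adds_cohen_real_U_forcing[OF U(3)] by blast
  ultimately show ?thesis
    by blast
qed

end
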